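(* Let $t\ge 1$ and let $n_1,\dots,n_k$ be nonnegative integers. Then \[ \mathcal{L}^{(t)}\Big(\prod_{i=1}^{k} U^{(t)}_{n_i}(x)\Big) \] equals the number of noncrossing set partitions of the totally ordered set $[n_1]\sqcup[n_2]\sqcup\dots\sqcup[n_k]$ in which every block has size $t+1$ and no block is contained in a single $[n_i]$.
   Context: Fix an integer $t\ge1$. For $n\ge 0$ let $P_n$ be the path graph with vertices $1,\dots,n$ and edges $\{i,i+1\}$. A $t$-path in $P_n$ is a set of $t+1$ consecutive vertices $\{i,i+1,\dots,i+t\}$ (together with its $t$ edges). The Chebyshev polynomial of the second kind of order $t$ is $U^{(t)}_n(x)=\sum_{F}(-1)^{|F|}x^{\,n-(t+1)|F|}$, the sum over all families $F$ of pairwise vertex-disjoint $t$-paths in $P_n$ (so $U^{(t)}_0=1$; fixed points get weight $x$, $t$-paths weight $-1$). A set partition of a totally ordered set is noncrossing if there are no $a<b<c<d$ with $a,c$ in one block and $b,d$ in a different block. Let $\mu^{(t)}_m$ be the number of noncrossing set partitions of $[m]=\{1,\dots,m\}$ all of whose blocks have size $t+1$ (with $\mu^{(t)}_0=1$), and let $\mathcal{L}^{(t)}$ be the linear functional on polynomials with $\mathcal{L}^{(t)}(x^m)=\mu^{(t)}_m$. The disjoint union $[n_1]\sqcup\dots\sqcup[n_k]$ is totally ordered by listing $[n_1]$ first (in its natural order), then $[n_2]$, etc. *)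

theory Defs
  imports Main "HOL-Library.Disjoint_Sets" "HOL-Computational_Algebra.Polynomial"
begin

text \<open>t-paths in the path graph P_n on vertices 1..n: sets of t+1 consecutive vertices.\<close>
definition tpaths :: "nat \<Rightarrow> nat \<Rightarrow> nat set set" where
  "tpaths t n = {{i..i+t} | i. 1 \<le> i \<and> i + t \<le> n}"

text \<open>Chebyshev polynomial of the second kind of order t:
  sum over families of pairwise vertex-disjoint t-paths.\<close>
definition chebU :: "nat \<Rightarrow> nat \<Rightarrow> int poly" where
  "chebU t n = (\<Sum>F\<in>{F. F \<subseteq> tpaths t n \<and> disjoint F}.
                  monom ((-1) ^ card F) (n - (t+1) * card F))"

definition noncrossing :: "nat set set \<Rightarrow> bool" where
  "noncrossing P \<longleftrightarrow> (\<forall>B\<in>P. \<forall>C\<in>P. B \<noteq> C \<longrightarrow>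
      \<not> (\<exists>a b c d. a < b \<and> b < c \<and> c < d \<and> a \<in> B \<and> c \<in> B \<and> b \<in> C \<and> d \<in> C))"

definition NCpart :: "nat \<Rightarrow> nat set \<Rightarrow> nat set set set" where
  "NCpart t A = {P. partition_on A P \<and> noncrossing P \<and> (\<forall>B\<in>P. card B = t + 1)}"

definition mu :: "nat \<Rightarrow> nat \<Rightarrow> nat" where
  "mu t m = card (NCpart t {1..m})"

definition Lfun :: "nat \<Rightarrow> int poly \<Rightarrow> int" where
  "Lfun t p = (\<Sum>m\<le>degree p. coeff p m * int (mu t m))"

text \<open>The disjoint union [n_1] \<sqcup> ... \<sqcup> [n_k] is realised as {1..n_1+...+n_k}
  with the i-th summand (0-indexed) occupying the block seg ns i.\<close>
definition seg :: "nat list \<Rightarrow> nat \<Rightarrow> nat set" where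
  "seg ns i = {sum_list (take i ns) + 1 .. sum_list (take i ns) + ns ! i}"

end

theory Submission
  imports Defs
begin

(* Proof by inclusion-exclusion.  Put N = n_1 + ... + n_k and let T be the set of t-paths
   of P_N lying inside a single segment [n_i] ("segment paths").
   (1) Multiplying out the defining sums, the product of the U_{n_i} equals the sum over
       families F of pairwise disjoint segment paths of (-1)^|F| x^(N - (t+1)|F|).
   (2) The number of noncrossing (t+1)-partitions of a finite set of naturals depends only on
       its size; and since an interval block crosses nothing, the (t+1)-partitions of [N]
       containing all blocks of F correspond to those of [N] minus the union of F.  Hence
       L applied to x^(N - (t+1)|F|) counts the partitions P of [N] with F a subset of P.
   (3) Swapping the two sums, each partition P gets the weight (sum over F within P and T of
       (-1)^|F|), which is 1 if P contains no segment path and 0 otherwise.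
   (4) A noncrossing partition of an interval having a block inside an interval S also has
       an interval block inside S; so "no block inside a segment" means "no segment path". *)

lemma Lfun_bound:
  assumes "degree p \<le> D"
  shows "Lfun t p = (\<Sum>m\<le>D. coeff p m * int (mu t m))"
  unfolding Lfun_def
  by (rule sum.mono_neutral_left) (use assms in \<open>auto simp: coeff_eq_0\<close>)

lemma Lfun_add: "Lfun t (p + q) = Lfun t p + Lfun t q"
proof -
  let ?D = "max (degree p) (degree q)"
  have "Lfun t (p + q) = (\<Sum>m\<le>?D. coeff (p + q) m * int (mu t m))"
    by (rule Lfun_bound) (meson degree_add_le max.cobounded1 max.cobounded2)
  also have "\<dots> = (\<Sum>m\<le>?D. coeff p m * int (mu t m)) + (\<Sum>m\<le>?D. coeff q m * int (mu t m))"
    by (simp add: sum.distrib distrib_right)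
  also have "\<dots> = Lfun t p + Lfun t q"
    by (simp add: Lfun_bound[symmetric])
  finally show ?thesis .
qed

lemma Lfun_sum: "finite A \<Longrightarrow> Lfun t (\<Sum>a\<in>A. f a) = (\<Sum>a\<in>A. Lfun t (f a))"
  by (induction A rule: finite_induct) (simp_all add: Lfun_add, simp add: Lfun_def)

lemma Lfun_monom: "Lfun t (monom c d) = c * int (mu t d)"
proof -
  have "Lfun t (monom c d) = (\<Sum>m\<le>d. coeff (monom c d) m * int (mu t m))"
    by (rule Lfun_bound) (simp add: degree_monom_le)
  also have "\<dots> = c * int (mu t d)"
    by (simp add: coeff_monom if_distrib[of "\<lambda>x. x * _"] sum.delta cong: if_cong)
  finally show ?thesis .
qed

definition crosses :: "nat set \<Rightarrow> nat set \<Rightarrow> bool" where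
  "crosses B C \<longleftrightarrow> (\<exists>a b c d. a < b \<and> b < c \<and> c < d \<and> a \<in> B \<and> c \<in> B \<and> b \<in> C \<and> d \<in> C)"

lemma NCpart_iff:
  "P \<in> NCpart t A \<longleftrightarrow> partition_on A P \<and> (\<forall>B\<in>P. \<forall>C\<in>P. B \<noteq> C \<longrightarrow> \<not> crosses B C)
     \<and> (\<forall>B\<in>P. card B = t + 1)"
  unfolding NCpart_def noncrossing_def crosses_def by simp

lemma NCpart_D:
  assumes "P \<in> NCpart t A"
  shows "partition_on A P" "\<Union>P = A" "disjoint P"
    and "\<And>B C. B \<in> P \<Longrightarrow> C \<in> P \<Longrightarrow> B \<noteq> C \<Longrightarrow> \<not> crosses B C"
    and "\<And>B. B \<in> P \<Longrightarrow> card B = t + 1"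
  using assms unfolding NCpart_iff partition_on_def by simp_all

lemma crosses_image:
  assumes f: "strict_mono_on A f" and BA: "B \<subseteq> A" and CA: "C \<subseteq> A"
    and cr: "crosses (f ` B) (f ` C)"
  shows "crosses B C"
proof -
  obtain a b c d where abcd: "a \<in> B" "c \<in> B" "b \<in> C" "d \<in> C"
    and lt: "f a < f b" "f b < f c" "f c < f d"
    using cr unfolding crosses_def by blast
  have "a < b" "b < c" "c < d"
    using lt abcd BA CA strict_mono_on_less[OF f] by (meson subsetD)+
  with abcd show ?thesis unfolding crosses_def by blast
qed

lemma NCpart_image:
  assumes f: "strict_mono_on A f" and P: "P \<in> NCpart t A"
  shows "(`) f ` P \<in> NCpart t (f ` A)"
  unfolding NCpart_iff
proof (intro conjI ballI impI)
  note D = NCpart_D[OF P]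
  have inj: "inj_on f A" using f strict_mono_on_imp_inj_on by blast
  have sub: "B \<subseteq> A" if "B \<in> P" for B using that D(2) by blast
  have "{} \<notin> (`) f ` P" using D(1) by (auto simp: partition_on_def)
  then show "partition_on (f ` A) ((`) f ` P)"
    using partition_on_inj_image[OF D(1) inj] by simp
  show "\<not> crosses X Y" if "X \<in> (`) f ` P" "Y \<in> (`) f ` P" "X \<noteq> Y" for X Y
    using that D(4) crosses_image[OF f] sub by blast
  show "card X = t + 1" if "X \<in> (`) f ` P" for X
    using that D(5) sub inj by (auto simp: card_image inj_on_subset)
qed

lemma strict_mono_on_the_inv_into:
  assumes f: "strict_mono_on A (f :: 'a :: linorder \<Rightarrow> 'b :: linorder)"
  shows "strict_mono_on (f ` A) (the_inv_into A f)"
proof (rule strict_mono_onI)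
  have inj: "inj_on f A" using f strict_mono_on_imp_inj_on by blast
  fix x y assume "x \<in> f ` A" "y \<in> f ` A" "x < y"
  then obtain a b where ab: "a \<in> A" "b \<in> A" "x = f a" "y = f b" by auto
  with \<open>x < y\<close> have "a < b" using strict_mono_on_less[OF f] by auto
  thus "the_inv_into A f x < the_inv_into A f y" using ab inj by (simp add: the_inv_into_f_f)
qed

lemma card_NCpart_strict_mono:
  assumes f: "strict_mono_on A f"
  shows "card (NCpart t (f ` A)) = card (NCpart t A)"
proof -
  let ?g = "the_inv_into A f"
  have inj: "inj_on f A" using f strict_mono_on_imp_inj_on by blast
  have gfA: "?g ` f ` A = A" using inj by (rule the_inv_into_onto)
  have gf: "?g ` f ` B = B" if "B \<subseteq> A" for B
    using that inj by (auto simp: the_inv_into_f_f subset_iff image_iff)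
  have fg: "f ` ?g ` B = B" if "B \<subseteq> f ` A" for B
    using that inj by (auto simp: f_the_inv_into_f subset_iff image_iff)
  have "bij_betw ((`) ((`) f)) (NCpart t A) (NCpart t (f ` A))"
  proof (rule bij_betw_byWitness[where f' = "(`) ((`) ?g)"])
    show "\<forall>P\<in>NCpart t A. (`) ?g ` (`) f ` P = P"
    proof
      fix P assume P: "P \<in> NCpart t A"
      have "?g ` f ` B = B" if "B \<in> P" for B
        using gf Union_upper[OF that] NCpart_D(2)[OF P] by simp
      then show "(`) ?g ` (`) f ` P = P" by (simp add: image_image cong: image_cong)
    qed
    show "\<forall>Q\<in>NCpart t (f ` A). (`) f ` (`) ?g ` Q = Q"
    proof
      fix Q assume Q: "Q \<in> NCpart t (f ` A)"
      have "f ` ?g ` B = B" if "B \<in> Q" for B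
        using fg Union_upper[OF that] NCpart_D(2)[OF Q] by simp
      then show "(`) f ` (`) ?g ` Q = Q" by (simp add: image_image cong: image_cong)
    qed
    show "(`) ((`) f) ` NCpart t A \<subseteq> NCpart t (f ` A)"
      using NCpart_image[OF f] by (rule image_subsetI)
    show "(`) ((`) ?g) ` NCpart t (f ` A) \<subseteq> NCpart t A"
      using NCpart_image[OF strict_mono_on_the_inv_into[OF f]] unfolding gfA by (rule image_subsetI)
  qed
  thus ?thesis by (rule bij_betw_same_card[symmetric])
qed

lemma card_NCpart_mu:
  assumes "finite A"
  shows "card (NCpart t A) = mu t (card A)"
proof -
  define xs where "xs = sorted_list_of_set A"
  have sorted: "sorted_wrt (<) xs" and set_xs: "set xs = A" and len: "length xs = card A"
    using assms by (auto simp: xs_def)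
  define f where "f i = xs ! (i - 1)" for i
  have "strict_mono_on {1..card A} f"
  proof (rule strict_mono_onI)
    fix r s assume "r \<in> {1..card A}" "s \<in> {1..card A}" "r < s"
    then show "f r < f s" using sorted len by (simp add: f_def sorted_wrt_nth_less)
  qed
  moreover have "f ` {1..card A} = A"
  proof
    show "f ` {1..card A} \<subseteq> A" using set_xs len by (auto simp: f_def)
    show "A \<subseteq> f ` {1..card A}"
    proof
      fix x assume "x \<in> A"
      then obtain i where "i < length xs" "xs ! i = x" using set_xs by (metis in_set_conv_nth)
      then have "Suc i \<in> {1..card A}" "f (Suc i) = x" using len by (auto simp: f_def)
      then show "x \<in> f ` {1..card A}" by blast
    qed
  qed
  ultimately show ?thesis using card_NCpart_strict_mono by (metis mu_def)
qed

definition ivl :: "nat set \<Rightarrow> bool" where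
  "ivl B \<longleftrightarrow> (\<forall>x\<in>B. \<forall>z\<in>B. \<forall>y. x \<le> y \<and> y \<le> z \<longrightarrow> y \<in> B)"

lemma ivl_atLeastAtMost [simp]: "ivl {a..b}"
  unfolding ivl_def by auto

lemma ivl_card_eq:
  assumes "ivl B" "card B = t + 1"
  shows "B = {Min B..Min B + t}"
proof -
  have fin: "finite B" and ne: "B \<noteq> {}" using assms(2) card.infinite by fastforce+
  have B_eq: "B = {Min B..Max B}"
  proof
    show "B \<subseteq> {Min B..Max B}" using fin by auto
    show "{Min B..Max B} \<subseteq> B"
      using assms(1) Min_in[OF fin ne] Max_in[OF fin ne] unfolding ivl_def
      by (meson atLeastAtMost_iff subsetI)
  qed
  have "Min B \<le> Max B" using fin ne by simp
  moreover have "card {Min B..Max B} = t + 1" using assms(2) by (simp only: B_eq[symmetric])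
  ultimately have "Max B = Min B + t" by simp
  then show ?thesis using B_eq by (simp only:)
qed

lemma disjoint_ivl_not_crosses:
  assumes "B \<inter> C = {}" "ivl B \<or> ivl C"
  shows "\<not> crosses B C"
proof
  assume "crosses B C"
  then obtain a b c d where lt: "a < b" "b < c" "c < d" and mem: "a \<in> B" "c \<in> B" "b \<in> C" "d \<in> C"
    unfolding crosses_def by blast
  from assms(2) have "b \<in> B \<or> c \<in> C"
  proof
    assume "ivl B" then show ?thesis using lt mem unfolding ivl_def by (meson less_imp_le)
  next
    assume "ivl C" then show ?thesis using lt mem unfolding ivl_def by (meson less_imp_le)
  qed
  then show False using assms(1) mem by blast
qed

lemma NCpart_remove_blocks:
  assumes P: "P \<in> NCpart t A" and F: "F \<subseteq> P"
  shows "P - F \<in> NCpart t (A - \<Union>F)"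
proof -
  note D = NCpart_D[OF P]
  have U: "\<Union>(P - F) = A - \<Union>F"
  proof (intro equalityI subsetI)
    fix x assume "x \<in> \<Union>(P - F)"
    then obtain B where B: "B \<in> P" "B \<notin> F" "x \<in> B" by blast
    have "x \<notin> \<Union>F"
    proof
      assume "x \<in> \<Union>F"
      then obtain C where "C \<in> F" "x \<in> C" by blast
      with B F disjointD[OF D(3), of B C] show False by blast
    qed
    then show "x \<in> A - \<Union>F" using B D(2) by blast
  next
    fix x assume "x \<in> A - \<Union>F"
    then show "x \<in> \<Union>(P - F)" using D(2) by blast
  qed
  have "partition_on (A - \<Union>F) (P - F)"
    using D(1) U pairwise_subset[OF D(3)] unfolding partition_on_def by blast
  then show ?thesis using D(4,5) unfolding NCpart_iff by blast
qed

lemma NCpart_add_blocks: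
  assumes Q: "Q \<in> NCpart t (A - \<Union>F)" and FA: "\<Union>F \<subseteq> A" and Fd: "disjoint F"
    and Fb: "\<And>B. B \<in> F \<Longrightarrow> ivl B \<and> card B = t + 1"
  shows "Q \<union> F \<in> NCpart t A"
  unfolding NCpart_iff
proof (intro conjI ballI impI)
  note D = NCpart_D[OF Q]
  have disj: "disjoint (Q \<union> F)"
    using disjoint_union[OF D(3) Fd] D(2) by blast
  have "{} \<notin> F" using Fb by fastforce
  then show "partition_on A (Q \<union> F)"
    using D(1) FA disj unfolding partition_on_def by blast
  show "\<not> crosses X Y" if XY: "X \<in> Q \<union> F" "Y \<in> Q \<union> F" "X \<noteq> Y" for X Y
  proof (cases "X \<in> Q \<and> Y \<in> Q")
    case True
    then show ?thesis using D(4) XY(3) by blast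
  next
    case False
    then have "ivl X \<or> ivl Y" using XY Fb by blast
    then show ?thesis using disjoint_ivl_not_crosses disjointD[OF disj XY] by blast
  qed
  show "card B = t + 1" if "B \<in> Q \<union> F" for B
    using that D(5) Fb by blast
qed

lemma card_NCpart_containing:
  assumes FA: "\<Union>F \<subseteq> A" and Fd: "disjoint F"
    and Fb: "\<And>B. B \<in> F \<Longrightarrow> ivl B \<and> card B = t + 1"
  shows "card {P \<in> NCpart t A. F \<subseteq> P} = card (NCpart t (A - \<Union>F))"
proof (rule bij_betw_same_card[of "\<lambda>P. P - F"],
       rule bij_betw_byWitness[where f' = "\<lambda>Q. Q \<union> F"])
  show "\<forall>P\<in>{P \<in> NCpart t A. F \<subseteq> P}. P - F \<union> F = P" by blast
  show "\<forall>Q\<in>NCpart t (A - \<Union>F). Q \<union> F - F = Q"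
  proof
    fix Q assume Q: "Q \<in> NCpart t (A - \<Union>F)"
    have "B \<notin> F" if "B \<in> Q" for B
    proof
      assume "B \<in> F"
      then have "B \<noteq> {}" using Fb by fastforce
      moreover have "B \<subseteq> A - \<Union>F" using NCpart_D(2)[OF Q] that by blast
      ultimately show False using \<open>B \<in> F\<close> by blast
    qed
    then show "Q \<union> F - F = Q" by blast
  qed
  show "(\<lambda>P. P - F) ` {P \<in> NCpart t A. F \<subseteq> P} \<subseteq> NCpart t (A - \<Union>F)"
    using NCpart_remove_blocks by blast
  show "(\<lambda>Q. Q \<union> F) ` NCpart t (A - \<Union>F) \<subseteq> {P \<in> NCpart t A. F \<subseteq> P}"
    using NCpart_add_blocks[OF _ FA Fd Fb] by blast
qed

lemma NCpart_block_nonempty: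
  assumes "P \<in> NCpart t A" "B \<in> P"
  shows "finite B" "B \<noteq> {}"
  using NCpart_D(5)[OF assms] card.infinite by fastforce+

(* If B is not an interval, the block through a gap of B lies strictly between Min B and
   Max B, since it may cross B neither from the left nor from the right. *)
lemma nested_block:
  assumes P: "P \<in> NCpart t A" and A: "ivl A" and B: "B \<in> P" "\<not> ivl B"
  shows "\<exists>C\<in>P. \<forall>d\<in>C. Min B < d \<and> d < Max B"
proof -
  note D = NCpart_D[OF P]
  have fin: "finite B" and ne: "B \<noteq> {}" using NCpart_block_nonempty[OF P B(1)] by blast+
  have minB: "Min B \<in> B" and maxB: "Max B \<in> B" using fin ne by simp_all
  obtain x z y where xz: "x \<in> B" "z \<in> B" "x \<le> y" "y \<le> z" "y \<notin> B"
    using B(2) unfolding ivl_def by blast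
  have "Min B \<le> x" "z \<le> Max B" using fin xz(1,2) by simp_all
  with xz minB maxB have lo: "Min B < y" and hi: "y < Max B"
    using le_neq_implies_less order_trans by metis+
  have "y \<in> A"
    using A minB maxB B(1) D(2) lo hi unfolding ivl_def by (meson Union_upper less_imp_le subsetD)
  then obtain C where C: "C \<in> P" "y \<in> C" using D(2) by blast
  have CB: "C \<noteq> B" using C xz(5) by blast
  have BC: "B \<inter> C = {}" using disjointD[OF D(3) B(1) C(1)] CB by blast
  have "Min B < d \<and> d < Max B" if d: "d \<in> C" for d
  proof -
    have "d \<noteq> Min B" "d \<noteq> Max B" using d minB maxB BC by blast+
    moreover have "\<not> d < Min B"
      using D(4)[OF C(1) B(1) CB] d C(2) lo hi minB maxB unfolding crosses_def by blast
    moreover have "\<not> Max B < d"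
      using D(4)[OF B(1) C(1) CB[symmetric]] d C(2) lo hi minB maxB unfolding crosses_def by blast
    ultimately show ?thesis by linarith
  qed
  then show ?thesis using C(1) by blast
qed

(* Every interval S containing a block also contains an interval block: descend along nested
   blocks, whose spans Max - Min strictly decrease. *)
lemma interval_block_inside:
  assumes P: "P \<in> NCpart t A" and A: "ivl A" and S: "ivl S" and B: "B \<in> P" "B \<subseteq> S"
  shows "\<exists>B'\<in>P. B' \<subseteq> S \<and> ivl B'"
  using B
proof (induction "Max B - Min B" arbitrary: B rule: less_induct)
  case (less B)
  show ?case
  proof (cases "ivl B")
    case True
    then show ?thesis using less.prems by blast
  next
    case False
    then obtain C where C: "C \<in> P" and inside: "\<And>d. d \<in> C \<Longrightarrow> Min B < d \<and> d < Max B"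
      using nested_block[OF P A less.prems(1)] by blast
    have finB: "finite B" and neB: "B \<noteq> {}" using NCpart_block_nonempty[OF P less.prems(1)] by blast+
    have finC: "finite C" and neC: "C \<noteq> {}" using NCpart_block_nonempty[OF P C] by blast+
    have "C \<subseteq> S"
      using S less.prems(2) inside Min_in[OF finB neB] Max_in[OF finB neB]
      unfolding ivl_def by (meson less_imp_le subsetD subsetI)
    moreover have "Max C - Min C < Max B - Min B"
      using inside[OF Min_in[OF finC neC]] inside[OF Max_in[OF finC neC]] by linarith
    ultimately show ?thesis using less.hyps C by blast
  qed
qed

definition families :: "'a set set \<Rightarrow> 'a set set set" where
  "families T = {F. F \<subseteq> T \<and> disjoint F}"

definition family_poly :: "nat \<Rightarrow> nat \<Rightarrow> nat set set \<Rightarrow> int poly" where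
  "family_poly t N T = (\<Sum>F\<in>families T. monom ((-1) ^ card F) (N - (t + 1) * card F))"

lemma chebU_family_poly: "chebU t n = family_poly t n (tpaths t n)"
  unfolding chebU_def family_poly_def families_def ..

lemma finite_families: "finite T \<Longrightarrow> finite (families T)"
  unfolding families_def by (simp add: finite_subset[of _ "Pow T"] subset_iff)

lemma card_Union_family:
  assumes F: "F \<in> families T" and T: "\<And>B. B \<in> T \<Longrightarrow> B \<subseteq> X \<and> card B = t + 1" and X: "finite X"
  shows "card (\<Union>F) = (t + 1) * card F" "(t + 1) * card F \<le> card X"
proof -
  have FT: "F \<subseteq> T" and Fd: "disjoint F" using F by (auto simp: families_def)
  have "card (\<Union>F) = sum card F"
    using card_Union_disjoint[OF Fd] T FT X by (meson finite_subset subsetD)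
  also have "\<dots> = (t + 1) * card F" using T FT by (simp add: subset_iff)
  finally show eq: "card (\<Union>F) = (t + 1) * card F" .
  have "\<Union>F \<subseteq> X" using T FT by blast
  then show "(t + 1) * card F \<le> card X" unfolding eq[symmetric] using X by (rule card_mono[rotated])
qed

lemma families_Un_bij:
  assumes sep: "\<And>X Y. X \<in> T \<Longrightarrow> Y \<in> T' \<Longrightarrow> X \<inter> Y = {}" and ne: "{} \<notin> T"
  shows "bij_betw (\<lambda>(F, G). F \<union> G) (families T \<times> families T') (families (T \<union> T'))"
proof (rule bij_betw_byWitness[where f' = "\<lambda>H. (H \<inter> T, H \<inter> T')"])
  have "X \<notin> T'" if "X \<in> T" for X using sep[OF that] ne that by (metis Int_absorb)
  then have TT': "T \<inter> T' = {}" by blast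
  show "\<forall>p\<in>families T \<times> families T'. (\<lambda>H. (H \<inter> T, H \<inter> T')) ((\<lambda>(F, G). F \<union> G) p) = p"
    using TT' by (auto simp: families_def)
  show "\<forall>H\<in>families (T \<union> T'). (\<lambda>(F, G). F \<union> G) (H \<inter> T, H \<inter> T') = H"
    by (auto simp: families_def)
  show "(\<lambda>(F, G). F \<union> G) ` (families T \<times> families T') \<subseteq> families (T \<union> T')"
  proof clarify
    fix F G assume "F \<in> families T" "G \<in> families T'"
    then have "F \<subseteq> T" "G \<subseteq> T'" "disjoint F" "disjoint G" by (auto simp: families_def)
    moreover have "\<Union>F \<inter> \<Union>G = {}" using calculation(1,2) sep by blast
    ultimately show "F \<union> G \<in> families (T \<union> T')"
      using disjoint_union unfolding families_def by blast
  qed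
  show "(\<lambda>H. (H \<inter> T, H \<inter> T')) ` families (T \<union> T') \<subseteq> families T \<times> families T'"
    using pairwise_subset unfolding families_def by blast
qed

lemma families_image_bij:
  assumes h: "inj h"
  shows "bij_betw ((`) ((`) h)) (families T) (families ((`) h ` T))"
proof (rule bij_betw_imageI)
  have inj_img: "inj ((`) h)" using inj_on_image_Pow[OF h] by simp
  then show "inj_on ((`) ((`) h)) (families T)"
    using inj_on_image_Pow[OF inj_img] by (metis Pow_UNIV inj_on_subset subset_UNIV)
  have disj_iff: "disjoint ((`) h ` F) \<longleftrightarrow> disjoint F" for F :: "'a set set"
    using h inj_img unfolding pairwise_image disjnt_def
    by (simp add: image_Int[symmetric] inj_eq pairwise_def)
  show "(`) ((`) h) ` families T = families ((`) h ` T)"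
  proof
    show "(`) ((`) h) ` families T \<subseteq> families ((`) h ` T)"
      using disj_iff unfolding families_def by blast
    show "families ((`) h ` T) \<subseteq> (`) ((`) h) ` families T"
    proof
      fix H assume "H \<in> families ((`) h ` T)"
      then obtain F where "F \<subseteq> T" "H = (`) h ` F" "disjoint H"
        unfolding families_def subset_image_iff by blast
      then show "H \<in> (`) ((`) h) ` families T"
        using disj_iff unfolding families_def by blast
    qed
  qed
qed

lemma family_poly_image:
  assumes h: "inj h"
  shows "family_poly t N ((`) h ` T) = family_poly t N T"
proof -
  have card_eq: "card ((`) h ` F) = card F" for F :: "nat set set"
    using inj_on_image_Pow[OF h] by (metis Pow_UNIV card_image inj_on_subset subset_UNIV)
  have "family_poly t N ((`) h ` T)
      = (\<Sum>F\<in>families T. monom ((-1) ^ card ((`) h ` F)) (N - (t + 1) * card ((`) h ` F)))"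
    unfolding family_poly_def by (rule sum.reindex_bij_betw[symmetric, OF families_image_bij[OF h]])
  then show ?thesis unfolding card_eq family_poly_def .
qed

lemma family_poly_mult:
  assumes T: "\<And>B. B \<in> T \<Longrightarrow> B \<subseteq> X \<and> card B = t + 1"
    and T': "\<And>B. B \<in> T' \<Longrightarrow> B \<subseteq> X' \<and> card B = t + 1"
    and fin: "finite X" "finite X'" and XX': "X \<inter> X' = {}"
  shows "family_poly t (card X) T * family_poly t (card X') T'
       = family_poly t (card X + card X') (T \<union> T')"
proof -
  let ?w = "\<lambda>N F. monom ((-1::int) ^ card F) (N - (t + 1) * card F)"
  have finT: "finite T" "finite T'"
    using T T' fin by (meson Pow_iff finite_Pow_iff finite_subset subsetI)+
  have ne: "{} \<notin> T" using T by fastforce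
  have sep: "B \<inter> B' = {}" if "B \<in> T" "B' \<in> T'" for B B' using T T' that XX' by blast
  have split: "?w (card X) F * ?w (card X') G = ?w (card X + card X') (F \<union> G)"
    if F: "F \<in> families T" and G: "G \<in> families T'" for F G
  proof -
    have "B \<notin> G" if "B \<in> F" for B
      using that F G sep[of B B] ne by (auto simp: families_def)
    then have "F \<inter> G = {}" by blast
    moreover have "finite F" "finite G"
      using F G finT by (auto simp: families_def intro: finite_subset)
    ultimately have "card (F \<union> G) = card F + card G" by (rule card_Un_disjoint[rotated 2])
    moreover have "(t + 1) * card F \<le> card X" "(t + 1) * card G \<le> card X'"
      using card_Union_family(2) F G T T' fin by blast+
    ultimately show ?thesis by (simp add: mult_monom power_add algebra_simps)
  qed
  have "family_poly t (card X) T * family_poly t (card X') T'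
      = (\<Sum>(F, G)\<in>families T \<times> families T'. ?w (card X) F * ?w (card X') G)"
    unfolding family_poly_def by (simp add: sum_product sum.cartesian_product)
  also have "\<dots> = (\<Sum>(F, G)\<in>families T \<times> families T'. ?w (card X + card X') (F \<union> G))"
    using split by (intro sum.cong) auto
  also have "\<dots> = family_poly t (card X + card X') (T \<union> T')"
    unfolding family_poly_def
    using sum.reindex_bij_betw[OF families_Un_bij[OF sep ne], where g = "?w (card X + card X')"]
    by (simp add: case_prod_unfold)
  finally show ?thesis .
qed

lemma tpaths_iff: "B \<in> tpaths t n \<longleftrightarrow> (\<exists>j. B = {j..j + t} \<and> 1 \<le> j \<and> j + t \<le> n)"
  unfolding tpaths_def by blast

lemma tpaths_block: "B \<in> tpaths t n \<Longrightarrow> ivl B \<and> card B = t + 1 \<and> B \<subseteq> {1..n}"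
  unfolding tpaths_def by auto

lemma finite_tpaths: "finite (tpaths t n)"
  by (rule finite_subset[of _ "Pow {1..n}"]) (use tpaths_block in blast, simp)

lemma tpaths_restrict:
  assumes "m \<le> n"
  shows "tpaths t m = {B \<in> tpaths t n. B \<subseteq> {1..m}}"
proof (intro set_eqI iffI)
  fix B assume "B \<in> tpaths t m"
  then show "B \<in> {B \<in> tpaths t n. B \<subseteq> {1..m}}"
    using assms tpaths_block[of B t m] unfolding tpaths_iff by auto
next
  fix B assume "B \<in> {B \<in> tpaths t n. B \<subseteq> {1..m}}"
  then obtain j where "B = {j..j + t}" "1 \<le> j" "B \<subseteq> {1..m}" unfolding tpaths_iff by blast
  then show "B \<in> tpaths t m" unfolding tpaths_iff by auto
qed

lemma tpaths_shift: "(`) ((+) S) ` tpaths t n = {B \<in> tpaths t (S + n). B \<subseteq> {S + 1..S + n}}"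
proof (intro set_eqI iffI)
  fix B assume "B \<in> (`) ((+) S) ` tpaths t n"
  then obtain B' where "B' \<in> tpaths t n" "B = (+) S ` B'" by blast
  then obtain j where "B = {j + S..j + t + S}" "1 \<le> j" "j + t \<le> n"
    unfolding tpaths_iff by auto
  then show "B \<in> {B \<in> tpaths t (S + n). B \<subseteq> {S + 1..S + n}}"
    unfolding tpaths_iff by (auto intro!: exI[of _ "j + S"])
next
  fix B assume "B \<in> {B \<in> tpaths t (S + n). B \<subseteq> {S + 1..S + n}}"
  then obtain j where B: "B = {j..j + t}" and "S + 1 \<le> j" "j + t \<le> S + n"
    unfolding tpaths_iff by auto
  then have "{j - S..j - S + t} \<in> tpaths t n" and "B = (+) S ` {j - S..j - S + t}"
    unfolding tpaths_iff by auto
  then show "B \<in> (`) ((+) S) ` tpaths t n" by blast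
qed

lemma seg_subset:
  assumes "i < length ns"
  shows "seg ns i \<subseteq> {1..sum_list ns}"
proof -
  have "sum_list (take (Suc i) ns) = sum_list (take i ns) + ns ! i"
    using assms by (simp add: take_Suc_conv_app_nth)
  moreover have "sum_list (take (Suc i) ns) \<le> sum_list ns"
    by (metis append_take_drop_id le_add1 sum_list_append)
  ultimately show ?thesis unfolding seg_def by auto
qed

lemma seg_snoc_less: "i < length ns \<Longrightarrow> seg (ns @ [n]) i = seg ns i"
  unfolding seg_def by (simp add: nth_append)

lemma seg_snoc_last: "seg (ns @ [n]) (length ns) = {sum_list ns + 1..sum_list ns + n}"
  unfolding seg_def by simp

definition seg_paths :: "nat \<Rightarrow> nat list \<Rightarrow> nat set set" where
  "seg_paths t ns = {B \<in> tpaths t (sum_list ns). \<exists>i<length ns. B \<subseteq> seg ns i}"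

lemma seg_paths_block: "B \<in> seg_paths t ns \<Longrightarrow> ivl B \<and> card B = t + 1 \<and> B \<subseteq> {1..sum_list ns}"
  unfolding seg_paths_def using tpaths_block by blast

lemma finite_seg_paths: "finite (seg_paths t ns)"
  unfolding seg_paths_def using finite_tpaths by simp

lemma seg_paths_snoc:
  "seg_paths t (ns @ [n]) = seg_paths t ns \<union> (`) ((+) (sum_list ns)) ` tpaths t n"
proof -
  let ?S = "sum_list ns"
  have in_segs: "(\<exists>i<length (ns @ [n]). B \<subseteq> seg (ns @ [n]) i)
      \<longleftrightarrow> (\<exists>i<length ns. B \<subseteq> seg ns i) \<or> B \<subseteq> {?S + 1..?S + n}" for B
    by (simp add: less_Suc_eq conj_disj_distribR ex_disj_distrib seg_snoc_less seg_snoc_last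
        cong: conj_cong)
  have "seg_paths t ns = {B \<in> tpaths t (?S + n). \<exists>i<length ns. B \<subseteq> seg ns i}"
    unfolding seg_paths_def tpaths_restrict[of ?S "?S + n", OF le_add1] using seg_subset by blast
  then show ?thesis
    unfolding seg_paths_def[of t "ns @ [n]"] tpaths_shift in_segs by auto
qed

lemma prod_chebU:
  "(\<Prod>i<length ns. chebU t (ns ! i)) = family_poly t (sum_list ns) (seg_paths t ns)"
proof (induction ns rule: rev_induct)
  case Nil
  have "families ({} :: nat set set) = {{}}" by (auto simp: families_def)
  then show ?case by (simp add: family_poly_def seg_paths_def)
next
  case (snoc n ns)
  let ?S = "sum_list ns"
  let ?shifted = "(`) ((+) ?S) ` tpaths t n"
  have shifted_blocks: "B \<subseteq> {?S + 1..?S + n} \<and> card B = t + 1" if "B \<in> ?shifted" for B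
    using that tpaths_block unfolding tpaths_shift by blast
  have "(\<Prod>i<length (ns @ [n]). chebU t ((ns @ [n]) ! i)) = (\<Prod>i<length ns. chebU t (ns ! i)) * chebU t n"
    by (simp add: nth_append)
  also have "\<dots> = family_poly t ?S (seg_paths t ns) * family_poly t n ?shifted"
    by (simp add: snoc.IH chebU_family_poly[of t n] family_poly_image)
  also have "\<dots> = family_poly t (card {1..?S} + card {?S + 1..?S + n}) (seg_paths t ns \<union> ?shifted)"
    using family_poly_mult[of "seg_paths t ns" "{1..?S}" t ?shifted "{?S + 1..?S + n}"]
      seg_paths_block shifted_blocks by fastforce
  also have "\<dots> = family_poly t (sum_list (ns @ [n])) (seg_paths t (ns @ [n]))"
    by (simp add: seg_paths_snoc)
  finally show ?case .
qed

lemma sum_Pow_neg_one_power: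
  assumes "finite S"
  shows "(\<Sum>X\<in>Pow S. (-1::int) ^ card X) = (if S = {} then 1 else 0)"
proof -
  have "(\<Prod>x\<in>S. (-1::int) + 1) = (\<Sum>X\<in>Pow S. (\<Prod>x\<in>X. (-1::int)) * (\<Prod>x\<in>S - X. 1))"
    by (rule prod_add[OF assms])
  then show ?thesis using assms by (cases "S = {}") (auto simp: power_0_left)
qed

lemma sum_weighted_count:
  assumes "finite A" "finite B"
  shows "(\<Sum>a\<in>A. w a * int (card {b \<in> B. R a b})) = (\<Sum>b\<in>B. \<Sum>a\<in>{a \<in> A. R a b}. w a)"
proof -
  have "(\<Sum>a\<in>A. w a * int (card {b \<in> B. R a b})) = (\<Sum>a\<in>A. \<Sum>b\<in>B. if R a b then w a else 0)"
    using assms(2) by (simp add: sum.If_cases Int_def mult.commute)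
  also have "\<dots> = (\<Sum>b\<in>B. \<Sum>a\<in>A. if R a b then w a else 0)"
    by (rule sum.swap)
  also have "\<dots> = (\<Sum>b\<in>B. \<Sum>a\<in>{a \<in> A. R a b}. w a)"
    using assms(1) by (simp add: sum.If_cases Int_def)
  finally show ?thesis .
qed

lemma sum_families_below:
  assumes "disjoint P" "finite T"
  shows "(\<Sum>F\<in>{F \<in> families T. F \<subseteq> P}. (-1::int) ^ card F) = (if P \<inter> T = {} then 1 else 0)"
proof -
  have eq: "{F \<in> families T. F \<subseteq> P} = Pow (P \<inter> T)"
    using pairwise_subset[OF assms(1)] unfolding families_def by blast
  have "finite (P \<inter> T)" using assms(2) by simp
  then show ?thesis unfolding eq by (rule sum_Pow_neg_one_power)
qed

lemma card_NCpart_containing_family: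
  assumes F: "F \<in> families (seg_paths t ns)"
  shows "card {P \<in> NCpart t {1..sum_list ns}. F \<subseteq> P} = mu t (sum_list ns - (t + 1) * card F)"
proof -
  let ?N = "sum_list ns"
  have blocks: "B \<subseteq> {1..?N} \<and> card B = t + 1" if "B \<in> seg_paths t ns" for B
    using seg_paths_block[OF that] by blast
  have FT: "F \<subseteq> seg_paths t ns" and Fd: "disjoint F" using F by (auto simp: families_def)
  have UF: "\<Union>F \<subseteq> {1..?N}" using FT blocks by blast
  have Fb: "ivl B \<and> card B = t + 1" if "B \<in> F" for B
    using seg_paths_block[of B t ns] FT that by blast
  have "card {P \<in> NCpart t {1..?N}. F \<subseteq> P} = card (NCpart t ({1..?N} - \<Union>F))"
    by (rule card_NCpart_containing[OF UF Fd Fb])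
  also have "\<dots> = mu t (card ({1..?N} - \<Union>F))"
    by (simp add: card_NCpart_mu)
  also have "card ({1..?N} - \<Union>F) = ?N - (t + 1) * card F"
    using card_Diff_subset[OF finite_subset[OF UF] UF] card_Union_family(1)[OF F blocks] by simp
  finally show ?thesis .
qed

(* Step (4): a block inside a segment forces an interval block inside it, which is then a
   segment path. *)
lemma no_block_in_segment_iff:
  assumes P: "P \<in> NCpart t {1..sum_list ns}"
  shows "(\<forall>B\<in>P. \<forall>i<length ns. \<not> B \<subseteq> seg ns i) \<longleftrightarrow> P \<inter> seg_paths t ns = {}"
proof
  assume "\<forall>B\<in>P. \<forall>i<length ns. \<not> B \<subseteq> seg ns i"
  then show "P \<inter> seg_paths t ns = {}" unfolding seg_paths_def by blast
next
  assume none: "P \<inter> seg_paths t ns = {}"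
  show "\<forall>B\<in>P. \<forall>i<length ns. \<not> B \<subseteq> seg ns i"
  proof (intro ballI allI impI notI)
    fix B i assume B: "B \<in> P" "B \<subseteq> seg ns i" and i: "i < length ns"
    have "ivl (seg ns i)" unfolding seg_def by simp
    then obtain B' where B': "B' \<in> P" "B' \<subseteq> seg ns i" "ivl B'"
      using interval_block_inside[OF P ivl_atLeastAtMost _ B] by blast
    have eq: "B' = {Min B'..Min B' + t}"
      using ivl_card_eq[OF B'(3) NCpart_D(5)[OF P B'(1)]] .
    have "Min B' \<in> B'" "Min B' + t \<in> B'" by (subst eq, simp)+
    moreover have "B' \<subseteq> {1..sum_list ns}" using NCpart_D(2)[OF P] B'(1) by blast
    ultimately have "1 \<le> Min B'" "Min B' + t \<le> sum_list ns" by auto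
    then have "B' \<in> tpaths t (sum_list ns)"
      using eq unfolding tpaths_iff by blast
    then have "B' \<in> seg_paths t ns" unfolding seg_paths_def using B'(2) i by blast
    then show False using none B'(1) by blast
  qed
qed

theorem mainTheorem1:
  fixes t :: nat and ns :: "nat list"
  assumes "t \<ge> 1"
  shows "Lfun t (\<Prod>i<length ns. chebU t (ns ! i)) =
    int (card {P \<in> NCpart t {1..sum_list ns}.
                \<forall>B\<in>P. \<forall>i<length ns. \<not> B \<subseteq> seg ns i})"
proof -
  let ?N = "sum_list ns" and ?T = "seg_paths t ns"
  let ?NC = "NCpart t {1..?N}"
  have fin: "finite (families ?T)" "finite ?NC"
    by (simp_all add: finite_families finite_seg_paths finitely_many_partition_on
                      NCpart_def finite_subset[of _ "{P. partition_on _ P}"] subset_iff)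
  have "Lfun t (\<Prod>i<length ns. chebU t (ns ! i))
      = (\<Sum>F\<in>families ?T. (-1) ^ card F * int (mu t (?N - (t + 1) * card F)))"
    using fin(1) by (simp add: prod_chebU family_poly_def Lfun_sum Lfun_monom)
  also have "\<dots> = (\<Sum>F\<in>families ?T. (-1) ^ card F * int (card {P \<in> ?NC. F \<subseteq> P}))"
    by (intro sum.cong refl) (simp only: card_NCpart_containing_family)
  also have "\<dots> = (\<Sum>P\<in>?NC. \<Sum>F\<in>{F \<in> families ?T. F \<subseteq> P}. (-1) ^ card F)"
    by (rule sum_weighted_count[OF fin])
  also have "\<dots> = (\<Sum>P\<in>?NC. if P \<inter> ?T = {} then 1 else 0)"
    using NCpart_D(3) by (simp add: sum_families_below finite_seg_paths)
  also have "\<dots> = int (card {P \<in> ?NC. P \<inter> ?T = {}})"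
    using fin(2) by (simp add: sum.If_cases Int_def)
  also have "{P \<in> ?NC. P \<inter> ?T = {}} = {P \<in> ?NC. \<forall>B\<in>P. \<forall>i<length ns. \<not> B \<subseteq> seg ns i}"
    using no_block_in_segment_iff by blast
  finally show ?thesis .
qed

end
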